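(* Let $(\Re,S,V)$ be a vector $S$-metric space and let $H,K,P,Q:\Re\to\Re$ be four maps satisfying: (a) the pairs $(H,P)$ and $(K,Q)$ satisfy the $CLR_{(P,Q)}$ property, i.e. there exist sequences $(x_n)$, $(y_n)$ in $\Re$ and points $\xi,a,b\in\Re$ such that $Hx_n\to\xi$, $Px_n\to\xi$, $Ky_n\to\xi$, $Qy_n\to\xi$ (convergence in $(\Re,S,V)$) and $\xi=Pa=Qb$; (b) the pairs $(H,P)$ and $(K,Q)$ are weakly compatible; (c) there is $\rho\in[0,1)$ such that for all $x,y,z\in\Re$, $$S(Hx,Hy,Kz)\preceq \rho\, U(x,y,z),$$ where $$U(x,y,z)=\max\Big[S(Px,Py,Qz),\ S(Px,Px,Hx),\ S(Qz,Qz,Kz),\ \tfrac12\{S(Px,Py,Kz)+S(Qz,Qz,Hx)\}\Big]$$ (the maximum being the supremum in $V$). Then $H,K,P,Q$ have a unique common fixed point in $\Re$, i.e. there is exactly one $\xi\in\Re$ with $H\xi=K\xi=P\xi=Q\xi=\xi$.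
   Context: A vector lattice (Riesz space) $V$ is an ordered real vector space whose order $\preceq$ is a lattice order; $\max$ of finitely many elements of $V$ denotes their supremum. Given a vector lattice $V$ and a nonempty set $\Re$, a vector $S$-metric is a map $S:\Re^3\to V$ such that for all $x_1,x_2,x_3,\alpha\in\Re$: (a) $S(x_1,x_2,x_3)\succeq 0$; (b) $S(x_1,x_2,x_3)=0$ iff $x_1=x_2=x_3$; (c) $S(x_1,x_2,x_3)\preceq S(x_1,x_2,\alpha)+S(x_2,x_2,\alpha)+S(x_3,x_3,\alpha)$. The triple $(\Re,S,V)$ is a vector $S$-metric space. A sequence $(x_n)$ in $\Re$ converges to $x\in\Re$ if there is a sequence $(c_n)$ in $V$ decreasing with infimum $0$ such that $S(x_n,x_n,x)\preceq c_n$ for all $n$. Two maps $A,B:\Re\to\Re$ are weakly compatible if $ABx=BAx$ whenever $Ax=Bx$, $x\in\Re$. *)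

theory Defs
  imports Main "HOL-Analysis.Analysis"
begin

text \<open>A vector lattice (Riesz space) is modelled by a type of class
  ordered_real_vector together with lattice (same order).
  The underlying nonempty set is modelled by the type 'a.\<close>

definition vector_S_metric :: "('a \<Rightarrow> 'a \<Rightarrow> 'a \<Rightarrow> 'v::{ordered_real_vector,lattice}) \<Rightarrow> bool" where
  "vector_S_metric S \<longleftrightarrow>
     (\<forall>x1 x2 x3. 0 \<le> S x1 x2 x3) \<and>
     (\<forall>x1 x2 x3. S x1 x2 x3 = 0 \<longleftrightarrow> (x1 = x2 \<and> x2 = x3)) \<and>
     (\<forall>x1 x2 x3 a. S x1 x2 x3 \<le> S x1 x2 a + S x2 x2 a + S x3 x3 a)"

definition decr_to_zero :: "(nat \<Rightarrow> 'v::{ordered_real_vector,lattice}) \<Rightarrow> bool" where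
  "decr_to_zero c \<longleftrightarrow> (\<forall>n. c (Suc n) \<le> c n) \<and>
     (\<forall>n. 0 \<le> c n) \<and> (\<forall>l. (\<forall>n. l \<le> c n) \<longrightarrow> l \<le> 0)"

definition S_converges ::
  "('a \<Rightarrow> 'a \<Rightarrow> 'a \<Rightarrow> 'v::{ordered_real_vector,lattice}) \<Rightarrow> (nat \<Rightarrow> 'a) \<Rightarrow> 'a \<Rightarrow> bool" where
  "S_converges S x l \<longleftrightarrow> (\<exists>c. decr_to_zero c \<and> (\<forall>n. S (x n) (x n) l \<le> c n))"

definition weakly_compatible :: "('a \<Rightarrow> 'a) \<Rightarrow> ('a \<Rightarrow> 'a) \<Rightarrow> bool" where
  "weakly_compatible A B \<longleftrightarrow> (\<forall>x. A x = B x \<longrightarrow> A (B x) = B (A x))"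

definition CLR_PQ ::
  "('a \<Rightarrow> 'a \<Rightarrow> 'a \<Rightarrow> 'v::{ordered_real_vector,lattice}) \<Rightarrow> ('a \<Rightarrow> 'a) \<Rightarrow> ('a \<Rightarrow> 'a) \<Rightarrow> ('a \<Rightarrow> 'a) \<Rightarrow> ('a \<Rightarrow> 'a) \<Rightarrow> bool" where
  "CLR_PQ S H P K Q \<longleftrightarrow> (\<exists>x y \<xi> a b.
     S_converges S (\<lambda>n. H (x n)) \<xi> \<and> S_converges S (\<lambda>n. P (x n)) \<xi> \<and>
     S_converges S (\<lambda>n. K (y n)) \<xi> \<and> S_converges S (\<lambda>n. Q (y n)) \<xi> \<and>
     \<xi> = P a \<and> \<xi> = Q b)"

end

theory Submission
  imports Defs
begin

text \<open>Only the convergence of \<open>K y\<^sub>n\<close> and \<open>Q y\<^sub>n\<close> to \<open>\<xi> = P a\<close> is needed: the condition at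
  \<open>(a, a, y\<^sub>n)\<close> bounds \<open>(1 - \<rho>) S(Ha, Ha, \<xi>)\<close> by a sequence decreasing to \<open>0\<close>, so
  \<open>H a = \<xi>\<close>. Whenever \<open>H x = P x\<close> and \<open>K z = Q z\<close>, or \<open>H x = P x = Q z\<close>, the value
  \<open>U x x z\<close> is dominated by \<open>S(Hx, Hx, Kz)\<close> itself, so \<open>S(Hx, Hx, Kz) \<le> \<rho> S(Hx, Hx, Kz)\<close>
  forces \<open>H x = K z\<close>. The second case with \<open>(a, b)\<close> gives \<open>K b = \<xi>\<close>; weak compatibility
  then makes \<open>\<xi>\<close> a coincidence point of both pairs, and the first case with \<open>(\<xi>, b)\<close>,
  \<open>(a, \<xi>)\<close> and with two common fixed points gives existence and uniqueness.\<close>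

lemma nonneg_le_contraction_eq_0:
  fixes D :: "'v::ordered_real_vector"
  assumes "0 \<le> D" "D \<le> \<rho> *\<^sub>R D" "\<rho> < 1"
  shows "D = 0"
proof -
  have "(1 - \<rho>) *\<^sub>R D \<le> 0"
    using assms(2) by (simp add: scaleR_diff_left)
  then have "D \<le> 0"
    using assms(3) by (simp add: scaleR_le_0_iff)
  then show ?thesis
    using assms(1) by simp
qed

lemma decr_to_zero_nonneg: "decr_to_zero c \<Longrightarrow> 0 \<le> c n"
  unfolding decr_to_zero_def by blast

lemma decr_to_zero_lower_bound_le_0: "decr_to_zero c \<Longrightarrow> (\<And>n. l \<le> c n) \<Longrightarrow> l \<le> 0"
  unfolding decr_to_zero_def by blast

lemma decr_to_zero_antimono:
  assumes "decr_to_zero c" "m \<le> n"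
  shows "c n \<le> c m"
  using assms unfolding decr_to_zero_def by (blast intro: lift_Suc_antimono_le)

lemma decr_to_zero_scaleR:
  assumes c: "decr_to_zero c" and "0 \<le> k"
  shows "decr_to_zero (\<lambda>n. k *\<^sub>R c n)"
  unfolding decr_to_zero_def
proof (intro conjI allI impI)
  fix n
  show "k *\<^sub>R c (Suc n) \<le> k *\<^sub>R c n"
    using c \<open>0 \<le> k\<close> by (simp add: decr_to_zero_def scaleR_left_mono)
  show "0 \<le> k *\<^sub>R c n"
    using \<open>0 \<le> k\<close> decr_to_zero_nonneg[OF c] by (rule scaleR_nonneg_nonneg)
next
  fix l
  assume l: "\<forall>n. l \<le> k *\<^sub>R c n"
  show "l \<le> 0"
  proof (cases "k = 0")
    case True
    then show ?thesis using l by simp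
  next
    case False
    with \<open>0 \<le> k\<close> have "0 < k" by simp
    have "(1 / k) *\<^sub>R l \<le> c n" for n
      using l \<open>0 < k\<close> scaleR_le_cancel_left_pos[of k "(1 / k) *\<^sub>R l" "c n"] by simp
    then have "(1 / k) *\<^sub>R l \<le> 0"
      by (rule decr_to_zero_lower_bound_le_0[OF c])
    then show ?thesis
      using \<open>0 < k\<close> by (simp add: scaleR_le_0_iff)
  qed
qed

lemma decr_to_zero_add:
  assumes c: "decr_to_zero c" and e: "decr_to_zero e"
  shows "decr_to_zero (\<lambda>n. c n + e n)"
  unfolding decr_to_zero_def
proof (intro conjI allI impI)
  fix n
  show "c (Suc n) + e (Suc n) \<le> c n + e n"
    using c e by (simp add: decr_to_zero_def add_mono)
  show "0 \<le> c n + e n"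
    using c e by (simp add: decr_to_zero_nonneg)
next
  fix l
  assume l: "\<forall>n. l \<le> c n + e n"
  have "l - c m \<le> e n" for m n
  proof -
    have "l \<le> c (max m n) + e (max m n)"
      using l by blast
    also have "\<dots> \<le> c m + e n"
      using c e by (intro add_mono decr_to_zero_antimono) auto
    finally show ?thesis by (simp add: algebra_simps)
  qed
  then have "l - c m \<le> 0" for m
    using decr_to_zero_lower_bound_le_0[OF e] by blast
  then show "l \<le> 0"
    using c by (intro decr_to_zero_lower_bound_le_0[of c]) auto
qed

locale vector_S_metric_space =
  fixes S :: "'a \<Rightarrow> 'a \<Rightarrow> 'a \<Rightarrow> 'v::{ordered_real_vector,lattice}"
  assumes S_metric: "vector_S_metric S"
begin

lemma S_nonneg: "0 \<le> S x y z"
  using S_metric unfolding vector_S_metric_def by simp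

lemma S_eq_0_iff: "S x y z = 0 \<longleftrightarrow> x = y \<and> y = z"
  using S_metric unfolding vector_S_metric_def by simp

lemma S_self [simp]: "S x x x = 0"
  by (simp add: S_eq_0_iff)

lemma S_triangle: "S x y z \<le> S x y w + S y y w + S z z w"
  using S_metric unfolding vector_S_metric_def by simp

lemma S_sym: "S x x y = S y y x"
proof -
  have "S u u v \<le> S v v u" for u v
    using S_triangle[of u u v u] by simp
  then show ?thesis
    using antisym by blast
qed

lemma S_triangle_through: "S x x z \<le> S x x y + S x x y + S z z y"
  using S_triangle[of x x z y] .

end

locale S_contraction = vector_S_metric_space S
  for S :: "'a \<Rightarrow> 'a \<Rightarrow> 'a \<Rightarrow> 'v::{ordered_real_vector,lattice}" +
  fixes H K P Q :: "'a \<Rightarrow> 'a" and \<rho> :: real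
  assumes rho_nonneg: "0 \<le> \<rho>" and rho_less_1: "\<rho> < 1"
    and contractive: "\<forall>x y z. S (H x) (H y) (K z) \<le> \<rho> *\<^sub>R
           sup (S (P x) (P y) (Q z))
             (sup (S (P x) (P x) (H x))
               (sup (S (Q z) (Q z) (K z))
                 ((1/2) *\<^sub>R (S (P x) (P y) (K z) + S (Q z) (Q z) (H x)))))"
begin

definition U :: "'a \<Rightarrow> 'a \<Rightarrow> 'a \<Rightarrow> 'v" where
  "U x y z = sup (S (P x) (P y) (Q z))
             (sup (S (P x) (P x) (H x))
               (sup (S (Q z) (Q z) (K z))
                 ((1/2) *\<^sub>R (S (P x) (P y) (K z) + S (Q z) (Q z) (H x)))))"

lemma contraction: "S (H x) (H y) (K z) \<le> \<rho> *\<^sub>R U x y z"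
  using contractive unfolding U_def by blast

lemma U_le_contraction_value_imp_eq:
  assumes "U x x z \<le> S (H x) (H x) (K z)"
  shows "H x = K z"
proof -
  have "S (H x) (H x) (K z) \<le> \<rho> *\<^sub>R S (H x) (H x) (K z)"
    using contraction[of x x z] assms rho_nonneg by (meson order_trans scaleR_left_mono)
  then have "S (H x) (H x) (K z) = 0"
    using nonneg_le_contraction_eq_0[OF S_nonneg _ rho_less_1] by blast
  then show ?thesis
    by (simp add: S_eq_0_iff)
qed

lemma contraction_near_limit:
  assumes "P a = \<xi>" and q: "S \<xi> \<xi> (Q w) \<le> \<gamma>" and k: "S \<xi> \<xi> (K w) \<le> \<epsilon>"
  shows "S \<xi> \<xi> (H a) \<le> \<epsilon> + \<epsilon> + \<rho> *\<^sub>R (S \<xi> \<xi> (H a) + (\<gamma> + \<gamma> + \<epsilon>))"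
proof -
  define d where "d = S \<xi> \<xi> (H a)"
  define T where "T = d + (\<gamma> + \<gamma> + \<epsilon>)"
  have "0 \<le> d" "0 \<le> \<gamma>" "0 \<le> \<epsilon>"
    using S_nonneg q k unfolding d_def by (blast intro: order_trans)+
  have "U a a w \<le> T"
    unfolding U_def \<open>P a = \<xi>\<close>
  proof (intro le_supI)
    show "S \<xi> \<xi> (Q w) \<le> T"
      using q \<open>0 \<le> d\<close> \<open>0 \<le> \<gamma>\<close> \<open>0 \<le> \<epsilon>\<close> unfolding T_def
      by (meson add_increasing add_increasing2 order_refl order_trans)
    show "S \<xi> \<xi> (H a) \<le> T"
      using \<open>0 \<le> \<gamma>\<close> \<open>0 \<le> \<epsilon>\<close> unfolding T_def d_def by (simp add: add_increasing2)
    have "S (Q w) (Q w) (K w) \<le> \<gamma> + \<gamma> + \<epsilon>"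
      using S_triangle_through[of "Q w" "K w" \<xi>] q k S_sym by (metis add_mono order_trans)
    then show "S (Q w) (Q w) (K w) \<le> T"
      using \<open>0 \<le> d\<close> unfolding T_def by (simp add: add_increasing)
    have "S (Q w) (Q w) (H a) \<le> \<gamma> + \<gamma> + d"
      using S_triangle_through[of "Q w" "H a" \<xi>] q S_sym unfolding d_def
      by (metis add_mono order_trans order_refl)
    then have "S \<xi> \<xi> (K w) + S (Q w) (Q w) (H a) \<le> T"
      using k unfolding T_def by (metis add_mono add.commute add.left_commute)
    moreover have "(1/2) *\<^sub>R (S \<xi> \<xi> (K w) + S (Q w) (Q w) (H a))
        \<le> S \<xi> \<xi> (K w) + S (Q w) (Q w) (H a)"
      using S_nonneg by (intro scaleR_left_le_one_le add_nonneg_nonneg) auto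
    ultimately show "(1/2) *\<^sub>R (S \<xi> \<xi> (K w) + S (Q w) (Q w) (H a)) \<le> T"
      by simp
  qed
  then have HK: "S (H a) (H a) (K w) \<le> \<rho> *\<^sub>R T"
    using contraction[of a a w] rho_nonneg by (meson order_trans scaleR_left_mono)
  have "d \<le> S \<xi> \<xi> (K w) + S \<xi> \<xi> (K w) + S (H a) (H a) (K w)"
    unfolding d_def by (rule S_triangle_through)
  also have "\<dots> \<le> \<epsilon> + \<epsilon> + \<rho> *\<^sub>R T"
    using k HK by (intro add_mono)
  finally show ?thesis
    unfolding d_def T_def .
qed

lemma H_eq_limit_of_KQ:
  assumes "S_converges S (\<lambda>n. K (y n)) \<xi>" "S_converges S (\<lambda>n. Q (y n)) \<xi>" "P a = \<xi>"
  shows "H a = \<xi>"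
proof -
  obtain e where e: "decr_to_zero e" "\<And>n. S \<xi> \<xi> (K (y n)) \<le> e n"
    using assms(1) unfolding S_converges_def by (metis S_sym)
  obtain c where c: "decr_to_zero c" "\<And>n. S \<xi> \<xi> (Q (y n)) \<le> c n"
    using assms(2) unfolding S_converges_def by (metis S_sym)
  define d where "d = S \<xi> \<xi> (H a)"
  have "(1 - \<rho>) *\<^sub>R d \<le> (e n + e n) + \<rho> *\<^sub>R (c n + c n + e n)" for n
    using contraction_near_limit[OF \<open>P a = \<xi>\<close> c(2) e(2), of n]
    unfolding d_def by (simp add: algebra_simps)
  moreover have "decr_to_zero (\<lambda>n. (e n + e n) + \<rho> *\<^sub>R (c n + c n + e n))"
    using c(1) e(1) rho_nonneg by (intro decr_to_zero_add decr_to_zero_scaleR)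
  ultimately have "(1 - \<rho>) *\<^sub>R d \<le> 0"
    by (blast intro: decr_to_zero_lower_bound_le_0)
  then have "d \<le> 0"
    using rho_less_1 by (simp add: scaleR_le_0_iff)
  then have "d = 0"
    using S_nonneg[of \<xi> \<xi> "H a"] unfolding d_def by simp
  then show ?thesis
    unfolding d_def by (simp add: S_eq_0_iff)
qed

lemma coincidence_values_eq:
  assumes "H x = P x" "K z = Q z"
  shows "H x = K z"
proof (rule U_le_contraction_value_imp_eq)
  have "(1/2) *\<^sub>R (S (H x) (H x) (K z) + S (K z) (K z) (H x)) = S (H x) (H x) (K z)"
    by (simp add: S_sym[of "K z"] scaleR_2[symmetric])
  then show "U x x z \<le> S (H x) (H x) (K z)"
    using assms S_nonneg by (simp add: U_def)
qed

lemma coincidence_point_KQ: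
  assumes "H x = P x" "P x = Q z"
  shows "K z = Q z"
proof -
  have "(1/2) *\<^sub>R S (H x) (H x) (K z) \<le> S (H x) (H x) (K z)"
    using S_nonneg by (rule scaleR_left_le_one_le) simp
  then have "U x x z \<le> S (H x) (H x) (K z)"
    using assms S_nonneg by (simp add: U_def S_sym[of "K z"])
  then have "H x = K z"
    by (rule U_le_contraction_value_imp_eq)
  with assms show ?thesis by simp
qed

lemma common_fixed_point_unique:
  assumes "H \<eta> = \<eta>" "P \<eta> = \<eta>" "K \<xi> = \<xi>" "Q \<xi> = \<xi>"
  shows "\<eta> = \<xi>"
  using coincidence_values_eq[of \<eta> \<xi>] assms by simp

end

theorem theorem2p1:
  fixes S :: "'a \<Rightarrow> 'a \<Rightarrow> 'a \<Rightarrow> 'v::{ordered_real_vector,lattice}"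
    and H K P Q :: "'a \<Rightarrow> 'a" and \<rho> :: real
  assumes "vector_S_metric S"
    and "CLR_PQ S H P K Q"
    and "weakly_compatible H P" and "weakly_compatible K Q"
    and "0 \<le> \<rho>" and "\<rho> < 1"
    and "\<forall>x y z. S (H x) (H y) (K z) \<le> \<rho> *\<^sub>R
           sup (S (P x) (P y) (Q z))
             (sup (S (P x) (P x) (H x))
               (sup (S (Q z) (Q z) (K z))
                 ((1/2) *\<^sub>R (S (P x) (P y) (K z) + S (Q z) (Q z) (H x)))))"
  shows "\<exists>!\<xi>. H \<xi> = \<xi> \<and> K \<xi> = \<xi> \<and> P \<xi> = \<xi> \<and> Q \<xi> = \<xi>"
proof -
  interpret S_contraction S H K P Q \<rho>
    using assms(1,5-7) by unfold_locales
  obtain y \<xi> a b where lim: "S_converges S (\<lambda>n. K (y n)) \<xi>" "S_converges S (\<lambda>n. Q (y n)) \<xi>"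
    and Pa: "P a = \<xi>" and Qb: "Q b = \<xi>"
    using assms(2) unfolding CLR_PQ_def by metis
  have Ha: "H a = \<xi>"
    using lim Pa by (rule H_eq_limit_of_KQ)
  then have Kb: "K b = \<xi>"
    using coincidence_point_KQ[of a b] Pa Qb by simp
  have HP: "H \<xi> = P \<xi>" and KQ: "K \<xi> = Q \<xi>"
    using assms(3,4) Ha Pa Kb Qb unfolding weakly_compatible_def by metis+
  have "H \<xi> = \<xi>"
    using coincidence_values_eq[of \<xi> b] HP Kb Qb by simp
  moreover have "K \<xi> = \<xi>"
    using coincidence_values_eq[of a \<xi>] Ha Pa KQ by simp
  ultimately show ?thesis
    using HP KQ common_fixed_point_unique by metis
qed

end
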